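(* Suppose A1–A3 hold and that $\nu_k\to0$. Let $C>0$ be such that $\nu_k\le C$ for all $k$, and for each $\delta>0$ let $k_0(\delta)$ be a positive integer such that $\nu_k\le\delta$ for all $k\ge k_0(\delta)$. Let $\{x_k\}$ be generated by Algorithm 1, let $\epsilon>0$ and $\delta=\kappa_c\epsilon^2/2$. If $T$ is a positive integer with $$T\ge\max\left\{\frac{2k_0(\delta/2)C}{\delta},\ 1+k_0(\delta/2),\ \frac{2(f(x_0)-f_{low})}{\kappa_c\epsilon^2}\right\},$$ then $\min_{k=0,\dots,T-1}\|\nabla f(x_k)\|\le\epsilon$. In particular, if $M>0$ is a constant, $0\le\nu_0\le M$ and $\nu_k=M/k$ for all $k\ge1$, then $\min_{k=0,\dots,T-1}\|\nabla f(x_k)\|\le\epsilon$ holds whenever $$T\ge\max\left\{\frac{16M^2}{\kappa_c^2\epsilon^4},\ 1+\frac{4M}{\kappa_c\epsilon^2},\ \frac{2(f(x_0)-f_{low})}{\kappa_c\epsilon^2}\right\}.$$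
   Context: Let $(X,\langle\cdot,\cdot\rangle)$ be a real Hilbert space with induced norm $\|\cdot\|$, and $f:X\to\mathbb{R}$ Fréchet differentiable with gradient $\nabla f$. Algorithm 1 (general non-monotone descent algorithm): parameters $x_0\in X$, $\alpha_0>0$, $\beta,\rho\in(0,1)$. For $k=0,1,2,\dots$: choose $d_k\in X$ with $\langle\nabla f(x_k),d_k\rangle<0$; then for $l=0,1,2,\dots$ choose a number $\nu_{k,l}\ge 0$ and test $$f(x_k+\alpha_k\beta^l d_k)\le f(x_k)+\rho\alpha_k\beta^l\langle\nabla f(x_k),d_k\rangle+\nu_{k,l};$$ let $l_k$ be the first $l$ for which this holds, set $\nu_k:=\nu_{k,l_k}$, $x_{k+1}=x_k+\alpha_k\beta^{l_k}d_k$ and $\alpha_{k+1}=\alpha_k\beta^{l_k-1}$. It is assumed the algorithm generates infinite sequences (all $l_k$ finite). Assumptions: A1: $\nabla f$ is Lipschitz continuous with constant $L>0$. A2: there is $f_{low}\in\mathbb{R}$ with $f(x)\ge f_{low}$ for all $x\in X$. A3: there are constants $c_1,c_2>0$ with $\langle\nabla f(x_k),d_k\rangle\le -c_1\|\nabla f(x_k)\|^2$ and $\|d_k\|\le c_2\|\nabla f(x_k)\|$ for all $k$. Constant: $\kappa_c=\min\left\{\rho\beta\alpha_0c_1,\ \frac{2\beta\rho(1-\rho)c_1^2}{Lc_2^2}\right\}$. *)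

theory Defs
  imports "HOL-Analysis.Analysis"
begin

definition kappa_c :: "real \<Rightarrow> real \<Rightarrow> real \<Rightarrow> real \<Rightarrow> real \<Rightarrow> real \<Rightarrow> real" where
  "kappa_c \<rho> \<beta> \<alpha>0 c1 c2 L =
     min (\<rho> * \<beta> * \<alpha>0 * c1) (2 * \<beta> * \<rho> * (1 - \<rho>) * c1^2 / (L * c2^2))"

end

theory Submission
  imports Defs
begin

text \<open>
  The accepted step sizes stay above \<open>m = min (\<beta> \<alpha>0) (2\<beta>(1 - \<rho>)c1 / (L c2\<^sup>2))\<close>:
  a rejected trial step violates the quadratic upper bound of an \<open>L\<close>-smooth function unless
  it exceeds \<open>2(1 - \<rho>)c1 / (L c2\<^sup>2)\<close>, and the next initial step
  \<open>\<alpha>(k+1) = \<alpha>(k) \<beta>^(l(k) - 1)\<close> restarts one backtracking level above the accepted one.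
  Hence each iteration decreases \<open>f\<close> by at least \<open>\<kappa>\<^sub>c \<parallel>\<nabla>f(x k)\<parallel>\<^sup>2\<close> up to the error \<open>\<nu> k\<close>,
  and telescoping gives \<open>T \<kappa>\<^sub>c min\<^sub>k\<^sub><\<^sub>T \<parallel>\<nabla>f(x k)\<parallel>\<^sup>2 \<le> f(x 0) - f\<^sub>l\<^sub>o\<^sub>w + (\<Sum>k<T. \<nu> k)\<close>.
  The lower bounds on \<open>T\<close> make the right-hand side at most \<open>T \<kappa>\<^sub>c \<epsilon>\<^sup>2\<close>; for \<open>\<nu> k = M/k\<close>
  this uses \<open>(\<Sum>k<T. \<nu> k) \<le> M (2 + ln T) \<le> 2 M \<surd>T\<close>.
\<close>

lemma lipschitz_gradient_upper_bound:
  fixes f :: "'a::real_inner \<Rightarrow> real" and grad :: "'a \<Rightarrow> 'a"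
  assumes deriv: "\<And>z. (f has_derivative (\<lambda>h. inner (grad z) h)) (at z)"
    and lip: "\<And>u v. norm (grad u - grad v) \<le> L * norm (u - v)"
    and s: "s \<ge> 0"
  shows "f (x + s *\<^sub>R d) \<le> f x + s * inner (grad x) d + L/2 * s^2 * (norm d)^2"
proof -
  define \<phi> where "\<phi> t = f (x + t *\<^sub>R d) - t * inner (grad x) d - L/2 * t^2 * (norm d)^2" for t
  have f_line: "((\<lambda>t. f (x + t *\<^sub>R d)) has_real_derivative inner (grad (x + t *\<^sub>R d)) d) (at t)" for t
  proof -
    have "((\<lambda>t. x + t *\<^sub>R d) has_derivative (\<lambda>h. h *\<^sub>R d)) (at t)"
      by (auto intro!: derivative_eq_intros)
    from has_derivative_compose[OF this deriv]
    show ?thesis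
      unfolding has_field_derivative_def by (simp add: mult.commute[of _ "inner _ _"])
  qed
  have \<phi>_deriv: "(\<phi> has_real_derivative
      (inner (grad (x + t *\<^sub>R d)) d - inner (grad x) d - L * t * (norm d)^2)) (at t)" for t
    unfolding \<phi>_def
    by (rule f_line[THEN DERIV_diff, THEN DERIV_diff, THEN DERIV_cong])
       (auto intro!: derivative_eq_intros)
  have "\<phi> s \<le> \<phi> 0"
  proof (rule DERIV_nonpos_imp_nonincreasing[OF s])
    fix t assume t: "0 \<le> t" "t \<le> s"
    have "inner (grad (x + t *\<^sub>R d)) d - inner (grad x) d = inner (grad (x + t *\<^sub>R d) - grad x) d"
      by (simp add: inner_diff_left)
    also have "\<dots> \<le> norm (grad (x + t *\<^sub>R d) - grad x) * norm d"
      by (rule norm_cauchy_schwarz)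
    also have "\<dots> \<le> L * norm (t *\<^sub>R d) * norm d"
      using lip[of "x + t *\<^sub>R d" x] by (simp add: mult_right_mono)
    also have "\<dots> = L * t * (norm d)^2"
      using t by (simp add: power2_eq_square)
    finally show "\<exists>y. DERIV \<phi> t :> y \<and> y \<le> 0"
      using \<phi>_deriv[of t] by auto
  qed
  then show ?thesis
    unfolding \<phi>_def by simp
qed

lemma armijo_failure_imp_step_gt:
  fixes f :: "'a::real_inner \<Rightarrow> real" and grad :: "'a \<Rightarrow> 'a"
  assumes deriv: "\<And>z. (f has_derivative (\<lambda>h. inner (grad z) h)) (at z)"
    and lip: "\<And>u v. norm (grad u - grad v) \<le> L * norm (u - v)"
    and L: "L > 0" and c2: "c2 > 0" and \<rho>: "\<rho> < 1" and s: "s > 0" and \<nu>: "\<nu> \<ge> 0"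
    and descent: "inner (grad x) d < 0"
    and angle: "inner (grad x) d \<le> - c1 * (norm (grad x))^2"
    and bounded: "norm d \<le> c2 * norm (grad x)"
    and fail: "f (x + s *\<^sub>R d) > f x + \<rho> * s * inner (grad x) d + \<nu>"
  shows "2 * (1 - \<rho>) * c1 / (L * c2^2) < s"
proof -
  define g where "g = norm (grad x)"
  have g: "g > 0"
    using descent unfolding g_def by (cases "grad x = 0") auto
  have "\<rho> * s * inner (grad x) d < s * inner (grad x) d + L/2 * s^2 * (norm d)^2"
    using fail lipschitz_gradient_upper_bound[OF deriv lip, of s x d] s \<nu> by linarith
  then have "s * ((1 - \<rho>) * - inner (grad x) d) < s * (L/2 * s * (norm d)^2)"
    by (simp add: algebra_simps power2_eq_square)
  then have slope: "(1 - \<rho>) * - inner (grad x) d < L/2 * s * (norm d)^2"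
    using s mult_less_cancel_left_pos by blast
  have "(1 - \<rho>) * (c1 * g^2) \<le> (1 - \<rho>) * - inner (grad x) d"
    using angle \<rho> unfolding g_def by (intro mult_left_mono) auto
  also note slope
  also have "L/2 * s * (norm d)^2 \<le> L/2 * s * (c2 * g)^2"
    using bounded L s unfolding g_def by (intro mult_left_mono power_mono) auto
  finally have "((1 - \<rho>) * c1) * g^2 < (L/2 * s * c2^2) * g^2"
    by (simp add: power_mult_distrib mult_ac)
  then have "(1 - \<rho>) * c1 < L/2 * s * c2^2"
    using g by (simp add: mult_less_cancel_right)
  then show ?thesis
    using L c2 by (simp add: divide_less_eq algebra_simps)
qed

lemma sum_le_of_bounded_eventually_le:
  fixes a :: "nat \<Rightarrow> real"
  assumes "\<And>k. a k \<le> C" and "\<And>k. k \<ge> K \<Longrightarrow> a k \<le> \<eta>" and "K \<le> T"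
  shows "(\<Sum>k<T. a k) \<le> real K * C + real (T - K) * \<eta>"
proof -
  have "(\<Sum>k<T. a k) = (\<Sum>k<K. a k) + (\<Sum>k\<in>{K..<T}. a k)"
    using \<open>K \<le> T\<close> by (simp add: lessThan_atLeast0 sum.atLeastLessThan_concat)
  also have "\<dots> \<le> (\<Sum>k<K. C) + (\<Sum>k\<in>{K..<T}. \<eta>)"
    using assms by (intro add_mono sum_mono) auto
  finally show ?thesis
    by simp
qed

lemma harm_le_one_plus_ln: "n > 0 \<Longrightarrow> harm n \<le> 1 + ln (real n)"
  using euler_mascheroni_sequence_decreasing[of 1 n] by (simp add: harm_def)

lemma ln_le_two_sqrt_minus_two: "x > 0 \<Longrightarrow> ln x \<le> 2 * (sqrt x - 1)"
  using ln_le_minus_one[of "sqrt x"] ln_sqrt[of x] by simp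

lemma sum_harmonic_le_sqrt:
  fixes a :: "nat \<Rightarrow> real"
  assumes a0: "a 0 \<le> M" and a: "\<And>k. k \<ge> 1 \<Longrightarrow> a k = M / real k"
    and M: "M \<ge> 0" and T: "T \<ge> 2"
  shows "(\<Sum>k<T. a k) \<le> 2 * M * sqrt (real T)"
proof -
  have "(\<Sum>k<T. a k) = a 0 + (\<Sum>k<T - 1. a (Suc k))"
    using T sum.lessThan_Suc_shift[of a "T - 1"] by simp
  also have "(\<Sum>k<T - 1. a (Suc k)) = M * harm (T - 1)"
    using a by (simp add: harm_altdef sum_distrib_left divide_inverse)
  finally have sum_eq: "(\<Sum>k<T. a k) = a 0 + M * harm (T - 1)" .
  have "harm (T - 1) \<le> 1 + ln (real T - 1)"
    using harm_le_one_plus_ln[of "T - 1"] T by simp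
  also have "ln (real T - 1) \<le> ln (real T)"
    using T by simp
  also have "ln (real T) \<le> 2 * (sqrt (real T) - 1)"
    using ln_le_two_sqrt_minus_two[of "real T"] T by simp
  finally have "M * harm (T - 1) \<le> M * (2 * sqrt (real T) - 1)"
    using M by (intro mult_left_mono) auto
  then show ?thesis
    using sum_eq a0 by (simp add: algebra_simps)
qed

locale nonmonotone_descent =
  fixes f :: "'a::real_inner \<Rightarrow> real"
    and grad :: "'a \<Rightarrow> 'a"
    and x d :: "nat \<Rightarrow> 'a"
    and \<alpha> :: "nat \<Rightarrow> real"
    and lk :: "nat \<Rightarrow> nat"
    and nu :: "nat \<Rightarrow> nat \<Rightarrow> real"
    and \<alpha>0 \<beta> \<rho> L flow c1 c2 :: real
  assumes deriv: "\<And>z. (f has_derivative (\<lambda>h. inner (grad z) h)) (at z)"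
    and \<alpha>0: "\<alpha>0 > 0" and \<beta>: "0 < \<beta>" "\<beta> < 1" and \<rho>: "0 < \<rho>" "\<rho> < 1"
    and alpha_init: "\<alpha> 0 = \<alpha>0"
    and descent: "\<And>k. inner (grad (x k)) (d k) < 0"
    and nu_nonneg: "\<And>k l. nu k l \<ge> 0"
    and accept: "\<And>k. f (x k + (\<alpha> k * \<beta> ^ lk k) *\<^sub>R d k)
                   \<le> f (x k) + \<rho> * \<alpha> k * \<beta> ^ lk k * inner (grad (x k)) (d k) + nu k (lk k)"
    and first: "\<And>k l. l < lk k \<Longrightarrow> \<not> (f (x k + (\<alpha> k * \<beta> ^ l) *\<^sub>R d k)
                   \<le> f (x k) + \<rho> * \<alpha> k * \<beta> ^ l * inner (grad (x k)) (d k) + nu k l)"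
    and x_step: "\<And>k. x (Suc k) = x k + (\<alpha> k * \<beta> ^ lk k) *\<^sub>R d k"
    and alpha_step: "\<And>k. \<alpha> (Suc k) = \<alpha> k * \<beta> powi (int (lk k) - 1)"
    and L: "L > 0" and lipschitz: "\<And>u v. norm (grad u - grad v) \<le> L * norm (u - v)"
    and lower_bound: "\<And>z. f z \<ge> flow"
    and c1: "c1 > 0" and c2: "c2 > 0"
    and angle: "\<And>k. inner (grad (x k)) (d k) \<le> - c1 * (norm (grad (x k)))^2"
    and bounded: "\<And>k. norm (d k) \<le> c2 * norm (grad (x k))"
begin

abbreviation \<kappa> :: real where
  "\<kappa> \<equiv> kappa_c \<rho> \<beta> \<alpha>0 c1 c2 L"

definition min_step :: real where
  "min_step = min (\<beta> * \<alpha>0) (2 * \<beta> * (1 - \<rho>) * c1 / (L * c2^2))"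

lemma min_step_pos: "min_step > 0"
  using \<alpha>0 \<beta> \<rho> L c1 c2 unfolding min_step_def by auto

lemma kappa_eq: "\<kappa> = \<rho> * c1 * min_step"
proof -
  have "\<rho> * c1 * min_step
      = min (\<rho> * c1 * (\<beta> * \<alpha>0)) (\<rho> * c1 * (2 * \<beta> * (1 - \<rho>) * c1 / (L * c2^2)))"
    unfolding min_step_def using \<rho> c1 by (simp add: min_mult_distrib_left)
  then show ?thesis
    unfolding kappa_c_def by (simp add: power2_eq_square mult_ac)
qed

lemma kappa_pos: "\<kappa> > 0"
  using kappa_eq min_step_pos \<rho> c1 by simp

lemma accepted_step_ge_min_step:
  assumes "\<alpha> k \<ge> min_step"
  shows "\<alpha> k * \<beta> ^ lk k \<ge> min_step"
proof (cases "lk k")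
  case 0
  then show ?thesis using assms by simp
next
  case (Suc l)
  have "\<alpha> k * \<beta> ^ l > 0"
    using assms min_step_pos \<beta> by simp
  from armijo_failure_imp_step_gt[OF deriv lipschitz L c2 \<rho>(2) this
      nu_nonneg[of k l] descent[of k] angle[of k] bounded[of k]]
  have "2 * (1 - \<rho>) * c1 / (L * c2^2) < \<alpha> k * \<beta> ^ l"
    using first[of l k] Suc by (simp add: not_le mult.assoc)
  then have "\<beta> * (2 * (1 - \<rho>) * c1 / (L * c2^2)) < \<beta> * (\<alpha> k * \<beta> ^ l)"
    using \<beta> by (intro mult_strict_left_mono) auto
  then show ?thesis
    unfolding min_step_def Suc by (simp add: mult_ac)
qed

lemma alpha_ge_min_step: "\<alpha> k \<ge> min_step"
proof (induction k)
  case 0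
  show ?case
    using alpha_init \<alpha>0 \<beta> unfolding min_step_def by (simp add: min_le_iff_disj)
next
  case (Suc k)
  have accepted: "\<alpha> k * \<beta> ^ lk k \<ge> min_step"
    by (rule accepted_step_ge_min_step[OF Suc])
  have "\<alpha> (Suc k) = \<alpha> k * \<beta> ^ lk k / \<beta>"
    using alpha_step[of k] \<beta> by (simp add: power_int_diff)
  moreover have "\<alpha> k * \<beta> ^ lk k \<le> \<alpha> k * \<beta> ^ lk k / \<beta>"
    using \<beta> accepted min_step_pos by (simp add: le_divide_eq mult_left_le)
  ultimately show ?case
    using accepted by simp
qed

lemma sufficient_decrease:
  "f (x (Suc k)) \<le> f (x k) - \<kappa> * (norm (grad (x k)))^2 + nu k (lk k)"
proof -
  have step: "\<alpha> k * \<beta> ^ lk k \<ge> min_step"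
    by (rule accepted_step_ge_min_step[OF alpha_ge_min_step])
  have "\<rho> * (\<alpha> k * \<beta> ^ lk k) \<ge> 0"
    using step min_step_pos \<rho> by simp
  then have "\<rho> * \<alpha> k * \<beta> ^ lk k * inner (grad (x k)) (d k)
      \<le> \<rho> * (\<alpha> k * \<beta> ^ lk k) * (- c1 * (norm (grad (x k)))^2)"
    using mult_left_mono[OF angle[of k]] by (metis mult.assoc)
  also have "\<dots> \<le> \<rho> * min_step * (- c1 * (norm (grad (x k)))^2)"
    using step \<rho> c1 by (intro mult_right_mono_neg mult_left_mono) auto
  also have "\<dots> = - \<kappa> * (norm (grad (x k)))^2"
    using kappa_eq by simp
  finally show ?thesis
    using accept[of k] x_step[of k] by simp
qed

lemma telescoped_decrease:
  "f (x T) \<le> f (x 0) - \<kappa> * (\<Sum>k<T. (norm (grad (x k)))^2) + (\<Sum>k<T. nu k (lk k))"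
proof (induction T)
  case (Suc T)
  then show ?case
    using sufficient_decrease[of T] by (simp add: distrib_left)
qed simp

lemma min_grad_norm_le:
  assumes T: "T \<ge> 1" and \<epsilon>: "\<epsilon> > 0"
    and errors: "(\<Sum>k<T. nu k (lk k)) \<le> real T * \<kappa> * \<epsilon>^2 / 2"
    and gap: "f (x 0) - flow \<le> real T * \<kappa> * \<epsilon>^2 / 2"
  shows "(MIN k\<in>{..<T}. norm (grad (x k))) \<le> \<epsilon>"
proof -
  define \<mu> where "\<mu> = (MIN k\<in>{..<T}. norm (grad (x k)))"
  have "\<mu> \<ge> 0"
    using T unfolding \<mu>_def by (subst Min_ge_iff) (auto simp: lessThan_empty_iff)
  have "real T * \<mu>^2 = (\<Sum>k<T. \<mu>^2)"
    by simp
  also have "\<dots> \<le> (\<Sum>k<T. (norm (grad (x k)))^2)"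
    using \<open>\<mu> \<ge> 0\<close> unfolding \<mu>_def by (intro sum_mono power_mono Min_le) auto
  finally have "\<kappa> * (real T * \<mu>^2) \<le> \<kappa> * (\<Sum>k<T. (norm (grad (x k)))^2)"
    using kappa_pos by (intro mult_left_mono) auto
  also have "\<dots> \<le> \<kappa> * (real T * \<epsilon>^2)"
    using telescoped_decrease[of T] lower_bound[of "x T"] errors gap by (simp add: algebra_simps)
  finally have "\<mu>^2 \<le> \<epsilon>^2"
    using kappa_pos T by (simp add: mult_le_cancel_left_pos)
  then show ?thesis
    unfolding \<mu>_def using \<epsilon> \<open>\<mu> \<ge> 0\<close> power2_le_imp_le by (simp add: \<mu>_def)
qed

lemma min_grad_norm_le_of_eventually_small_errors:
  assumes \<epsilon>: "\<epsilon> > 0" and \<delta>: "\<delta> = \<kappa> * \<epsilon>^2 / 2" and T: "T \<ge> 1"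
    and bounded_errors: "\<And>k. nu k (lk k) \<le> C"
    and small_errors: "\<And>k. k \<ge> K \<Longrightarrow> nu k (lk k) \<le> \<delta>/2"
    and T_K: "2 * real K * C / \<delta> \<le> real T" "1 + real K \<le> real T"
    and T_gap: "2 * (f (x 0) - flow) / (\<kappa> * \<epsilon>^2) \<le> real T"
  shows "(MIN k\<in>{..<T}. norm (grad (x k))) \<le> \<epsilon>"
proof (rule min_grad_norm_le[OF T \<epsilon>])
  have "\<delta> > 0"
    unfolding \<delta> using kappa_pos \<epsilon> by simp
  have "(\<Sum>k<T. nu k (lk k)) \<le> real K * C + real (T - K) * (\<delta>/2)"
    using T_K by (intro sum_le_of_bounded_eventually_le bounded_errors small_errors) auto
  also have "real K * C \<le> real T * (\<delta>/2)"
    using T_K \<open>\<delta> > 0\<close> by (simp add: divide_le_eq mult_ac)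
  also have "real (T - K) * (\<delta>/2) \<le> real T * (\<delta>/2)"
    using \<open>\<delta> > 0\<close> by (intro mult_right_mono) auto
  finally show "(\<Sum>k<T. nu k (lk k)) \<le> real T * \<kappa> * \<epsilon>^2 / 2"
    using \<delta> by (simp add: mult_ac)
  show "f (x 0) - flow \<le> real T * \<kappa> * \<epsilon>^2 / 2"
    using T_gap kappa_pos \<epsilon> by (simp add: divide_le_eq mult_ac)
qed

lemma min_grad_norm_le_of_harmonic_errors:
  assumes \<epsilon>: "\<epsilon> > 0" and M: "M > 0"
    and first_error: "nu 0 (lk 0) \<le> M"
    and harmonic_errors: "\<And>k. k \<ge> 1 \<Longrightarrow> nu k (lk k) = M / real k"
    and T_M: "16 * M^2 / (\<kappa>^2 * \<epsilon>^4) \<le> real T" "1 + 4 * M / (\<kappa> * \<epsilon>^2) \<le> real T"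
    and T_gap: "2 * (f (x 0) - flow) / (\<kappa> * \<epsilon>^2) \<le> real T"
  shows "(MIN k\<in>{..<T}. norm (grad (x k))) \<le> \<epsilon>"
proof -
  define a where "a = 4 * M / (\<kappa> * \<epsilon>^2)"
  have "a > 0"
    using M kappa_pos \<epsilon> unfolding a_def by simp
  then have T: "T \<ge> 2"
    using T_M(2) unfolding a_def by simp
  have "a^2 \<le> real T"
    using T_M(1) unfolding a_def by (simp add: power_divide power_mult_distrib flip: power_mult)
  then have "a * sqrt (real T) \<le> sqrt (real T) * sqrt (real T)"
    by (intro mult_right_mono real_le_rsqrt) auto
  then have "a * sqrt (real T) \<le> real T"
    by simp
  then have "2 * M * sqrt (real T) \<le> real T * \<kappa> * \<epsilon>^2 / 2"
    using M kappa_pos \<epsilon> unfolding a_def by (simp add: field_simps)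
  then have "(\<Sum>k<T. nu k (lk k)) \<le> real T * \<kappa> * \<epsilon>^2 / 2"
    using sum_harmonic_le_sqrt[of "\<lambda>k. nu k (lk k)", OF first_error harmonic_errors _ T] M
    by simp
  moreover have "f (x 0) - flow \<le> real T * \<kappa> * \<epsilon>^2 / 2"
    using T_gap kappa_pos \<epsilon> by (simp add: divide_le_eq mult_ac)
  ultimately show ?thesis
    using min_grad_norm_le T \<epsilon> by simp
qed

end

theorem corollary2:
  fixes f :: "'a::{real_inner, complete_space} \<Rightarrow> real"
    and grad :: "'a \<Rightarrow> 'a"
    and x d :: "nat \<Rightarrow> 'a"
    and \<alpha> :: "nat \<Rightarrow> real"
    and lk :: "nat \<Rightarrow> nat"
    and nu :: "nat \<Rightarrow> nat \<Rightarrow> real"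
    and \<alpha>0 \<beta> \<rho> L flow c1 c2 :: real
  assumes deriv: "\<And>z. (f has_derivative (\<lambda>h. inner (grad z) h)) (at z)"
    and \<alpha>0: "\<alpha>0 > 0" and \<beta>: "0 < \<beta>" "\<beta> < 1" and \<rho>: "0 < \<rho>" "\<rho> < 1"
    and alpha_init: "\<alpha> 0 = \<alpha>0"
    and descent: "\<And>k. inner (grad (x k)) (d k) < 0"
    and nu_nonneg: "\<And>k l. nu k l \<ge> 0"
    and accept: "\<And>k. f (x k + (\<alpha> k * \<beta> ^ lk k) *\<^sub>R d k)
                   \<le> f (x k) + \<rho> * \<alpha> k * \<beta> ^ lk k * inner (grad (x k)) (d k) + nu k (lk k)"
    and first: "\<And>k l. l < lk k \<Longrightarrow> \<not> (f (x k + (\<alpha> k * \<beta> ^ l) *\<^sub>R d k)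
                   \<le> f (x k) + \<rho> * \<alpha> k * \<beta> ^ l * inner (grad (x k)) (d k) + nu k l)"
    and x_step: "\<And>k. x (Suc k) = x k + (\<alpha> k * \<beta> ^ lk k) *\<^sub>R d k"
    and alpha_step: "\<And>k. \<alpha> (Suc k) = \<alpha> k * \<beta> powi (int (lk k) - 1)"
    and A1: "L > 0" "\<And>u v. norm (grad u - grad v) \<le> L * norm (u - v)"
    and A2: "\<And>z. f z \<ge> flow"
    and A3: "c1 > 0" "c2 > 0"
       "\<And>k. inner (grad (x k)) (d k) \<le> - c1 * (norm (grad (x k)))^2"
       "\<And>k. norm (d k) \<le> c2 * norm (grad (x k))"
  shows
    "(\<forall>C k0 \<epsilon> T \<delta>.
        (\<lambda>k. nu k (lk k)) \<longlonglongrightarrow> 0 \<longrightarrow>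
        C > 0 \<longrightarrow> (\<forall>k. nu k (lk k) \<le> C) \<longrightarrow>
        (\<forall>\<delta>'>0. k0 \<delta>' \<ge> (1::nat) \<and> (\<forall>k\<ge>k0 \<delta>'. nu k (lk k) \<le> \<delta>')) \<longrightarrow>
        \<epsilon> > 0 \<longrightarrow> \<delta> = kappa_c \<rho> \<beta> \<alpha>0 c1 c2 L * \<epsilon>^2 / 2 \<longrightarrow>
        T \<ge> (1::nat) \<longrightarrow>
        real T \<ge> Max {2 * real (k0 (\<delta>/2)) * C / \<delta>, 1 + real (k0 (\<delta>/2)),
                       2 * (f (x 0) - flow) / (kappa_c \<rho> \<beta> \<alpha>0 c1 c2 L * \<epsilon>^2)} \<longrightarrow>
        (MIN k\<in>{..<T}. norm (grad (x k))) \<le> \<epsilon>)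
     \<and>
     (\<forall>M \<epsilon> T.
        M > 0 \<longrightarrow> 0 \<le> nu 0 (lk 0) \<longrightarrow> nu 0 (lk 0) \<le> M \<longrightarrow>
        (\<forall>k\<ge>1. nu k (lk k) = M / real k) \<longrightarrow>
        \<epsilon> > 0 \<longrightarrow> T \<ge> (1::nat) \<longrightarrow>
        real T \<ge> Max {16 * M^2 / ((kappa_c \<rho> \<beta> \<alpha>0 c1 c2 L)^2 * \<epsilon>^4),
                       1 + 4 * M / (kappa_c \<rho> \<beta> \<alpha>0 c1 c2 L * \<epsilon>^2),
                       2 * (f (x 0) - flow) / (kappa_c \<rho> \<beta> \<alpha>0 c1 c2 L * \<epsilon>^2)} \<longrightarrow>
        (MIN k\<in>{..<T}. norm (grad (x k))) \<le> \<epsilon>)"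
proof -
  interpret nonmonotone_descent f grad x d \<alpha> lk nu \<alpha>0 \<beta> \<rho> L flow c1 c2
    by unfold_locales (use assms in auto)
  show ?thesis
  proof (intro conjI allI impI)
    fix C k0 \<epsilon> T \<delta>
    assume "\<forall>k. nu k (lk k) \<le> C"
      and k0: "\<forall>\<delta>'>0. k0 \<delta>' \<ge> (1::nat) \<and> (\<forall>k\<ge>k0 \<delta>'. nu k (lk k) \<le> \<delta>')"
      and "\<epsilon> > 0" and \<delta>: "\<delta> = \<kappa> * \<epsilon>^2 / 2" and "T \<ge> 1"
      and "real T \<ge> Max {2 * real (k0 (\<delta>/2)) * C / \<delta>, 1 + real (k0 (\<delta>/2)),
                          2 * (f (x 0) - flow) / (\<kappa> * \<epsilon>^2)}"
    moreover have "\<delta> > 0"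
      unfolding \<delta> using kappa_pos \<open>\<epsilon> > 0\<close> by simp
    ultimately show "(MIN k\<in>{..<T}. norm (grad (x k))) \<le> \<epsilon>"
      using k0[rule_format, of "\<delta>/2"]
      by (intro min_grad_norm_le_of_eventually_small_errors[where K = "k0 (\<delta>/2)"]) auto
  next
    fix M \<epsilon> T
    assume "M > 0" "nu 0 (lk 0) \<le> M" "\<forall>k\<ge>1. nu k (lk k) = M / real k" "\<epsilon> > 0"
      and "real T \<ge> Max {16 * M^2 / (\<kappa>^2 * \<epsilon>^4), 1 + 4 * M / (\<kappa> * \<epsilon>^2),
                          2 * (f (x 0) - flow) / (\<kappa> * \<epsilon>^2)}"
    then show "(MIN k\<in>{..<T}. norm (grad (x k))) \<le> \<epsilon>"
      by (intro min_grad_norm_le_of_harmonic_errors) auto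
  qed
qed

end
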